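(* The following hold: (1) $F$ is of class $C^1$ on $(1,+\infty)$ and $F'<0$ on $(1,+\infty)$; (2) $\lim_{E\to+\infty}F(E)=-\infty$; (3) $\lim_{E\to1^+}F(E)=+\infty$ and $\lim_{E\to1^-}F(E)=+\infty$; (4) $F$ has a unique zero $E_c$ in $(1,+\infty)$, and $F'(E_c)<0$; (5) $F(E)>0$ for all $E\in(0,1)$.
   Context: For $E\in(0,1)\cup(1,+\infty)$, let $$F(E)=\int_{\sqrt{(2-2\sqrt E)_+}}^{\sqrt{2+2\sqrt E}}\frac{2-x^2}{\sqrt{E-(x^2/2-1)^2}}\,dx,$$ where $(z)_+=\max\{z,0\}$. *)

theory Defs
  imports "HOL-Analysis.Analysis"
begin

text \<open>The (improper, but absolutely convergent) integral F(E), taken as a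
Henstock-Kurzweil integral over the closed interval. Division by zero at the
endpoints yields 0 in HOL, which is irrelevant (null set).\<close>

definition F :: "real \<Rightarrow> real" where
  "F E = integral {sqrt (max (2 - 2 * sqrt E) 0) .. sqrt (2 + 2 * sqrt E)}
           (\<lambda>x. (2 - x\<^sup>2) / sqrt (E - (x\<^sup>2 / 2 - 1)\<^sup>2))"

end

theory Submission
  imports Defs "HOL-Real_Asymp.Real_Asymp"
begin

text \<open>
  Write s = sqrt E. For E > 1 the substitution x = sqrt (2 + 2 s) sin t gives F E = G s, where G
  integrates over [0, pi/2] a kernel that is smooth in s with negative s-derivative, so F' < 0.
  For 0 < E < 1 the substitution x^2/2 - 1 = s sin t gives F E = H s, an integral over [-pi/2, pi/2].
  Pointwise bounds on the kernels give G s <= sqrt 2 pi - (pi/2) sqrt s, hence F tends to -infinity,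
  and, near s = 1, lower bounds C / (sqrt |s - 1| + c t') - K, where t' is the distance to the
  endpoint at which the kernel's denominator degenerates; integrating them shows that G and H grow
  like - sqrt 2 ln (sqrt |s - 1|). H is positive because its kernel is the t-derivative of
  sqrt 2 s cos t / sqrt (1 + s sin t), which vanishes at both endpoints, plus a term that is
  positive in the interior.
\<close>

lemma has_integral_arcsin_substitution:
  fixes f \<phi> \<phi>' :: "real \<Rightarrow> real"
  assumes "a \<le> b" and \<phi>_cont: "continuous_on {a..b} \<phi>"
    and \<phi>_image: "\<phi> ` {a..b} \<subseteq> {\<phi> a..\<phi> b}" and "-1 \<le> \<phi> a" "\<phi> b \<le> 1"
    and \<phi>_interior: "\<And>x. x \<in> {a<..<b} \<Longrightarrow> \<bar>\<phi> x\<bar> < 1 \<and> (\<phi> has_real_derivative \<phi>' x) (at x)"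
    and "continuous_on {arcsin (\<phi> a)..arcsin (\<phi> b)} f"
  shows "((\<lambda>x. \<phi>' x / sqrt (1 - (\<phi> x)\<^sup>2) * f (arcsin (\<phi> x)))
           has_integral integral {arcsin (\<phi> a)..arcsin (\<phi> b)} f) {a..b}"
proof -
  have \<phi>_bounds: "-1 \<le> \<phi> x \<and> \<phi> x \<le> 1" if "x \<in> {a..b}" for x
    using \<phi>_image that \<open>-1 \<le> \<phi> a\<close> \<open>\<phi> b \<le> 1\<close> by fastforce
  have "\<phi> b \<in> \<phi> ` {a..b}" using \<open>a \<le> b\<close> by simp
  then have "\<phi> a \<le> \<phi> b" using \<phi>_image by auto
  then have ordered: "arcsin (\<phi> a) \<le> arcsin (\<phi> b)"
    using \<phi>_bounds \<open>a \<le> b\<close> by (intro arcsin_le_arcsin) auto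
  have "((\<lambda>x. (\<phi>' x / sqrt (1 - (\<phi> x)\<^sup>2)) *\<^sub>R f (arcsin (\<phi> x))) has_integral
      integral {arcsin (\<phi> a)..arcsin (\<phi> b)} f - integral {arcsin (\<phi> b)..arcsin (\<phi> a)} f) {a..b}"
  proof (rule has_integral_substitution_general[where s="{a,b}"])
    show "(\<lambda>x. arcsin (\<phi> x)) ` {a..b} \<subseteq> {arcsin (\<phi> a)..arcsin (\<phi> b)}"
      using \<phi>_image \<phi>_bounds by (force intro!: arcsin_le_arcsin)
    show "continuous_on {a..b} (\<lambda>x. arcsin (\<phi> x))"
      using \<phi>_bounds by (intro continuous_on_arcsin \<phi>_cont) auto
    fix x assume "x \<in> {a..b} - {a,b}"
    then have "-1 < \<phi> x" "\<phi> x < 1" "(\<phi> has_real_derivative \<phi>' x) (at x)"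
      using \<phi>_interior by (auto simp: abs_less_iff)
    then have "((\<lambda>x. arcsin (\<phi> x)) has_real_derivative inverse (sqrt (1 - (\<phi> x)\<^sup>2)) * \<phi>' x) (at x)"
      by (intro DERIV_chain2[OF DERIV_arcsin]) auto
    then show "((\<lambda>x. arcsin (\<phi> x)) has_real_derivative \<phi>' x / sqrt (1 - (\<phi> x)\<^sup>2)) (at x within {a..b})"
      by (simp add: divide_inverse mult.commute has_field_derivative_at_within)
  qed (use assms in auto)
  then show ?thesis
    using ordered by (cases "arcsin (\<phi> a) = arcsin (\<phi> b)") auto
qed

lemma integral_ge_log_bound:
  fixes f :: "real \<Rightarrow> real"
  assumes "a < b" "0 < e" "0 < c" "0 \<le> C" and f_cont: "continuous_on {a..b} f"
    and bound: "\<And>t. t \<in> {a..b} \<Longrightarrow> C / (e + c * (t - a)) - K \<le> f t"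
  shows "C / c * (ln (c * (b - a)) - ln e) - K * (b - a) \<le> integral {a..b} f"
proof -
  let ?P = "\<lambda>t. C / c * ln (e + c * (t - a)) - K * t"
  have "((\<lambda>t. C / (e + c * (t - a)) - K) has_integral ?P b - ?P a) {a..b}"
  proof (rule fundamental_theorem_of_calculus)
    fix t assume "t \<in> {a..b}"
    then have "0 < e + c * (t - a)" using assms by (simp add: add_pos_nonneg)
    then have "(?P has_real_derivative C / c * (c / (e + c * (t - a))) - K) (at t)"
      by (auto intro!: derivative_eq_intros simp: divide_inverse)
    then have "(?P has_real_derivative C / (e + c * (t - a)) - K) (at t)"
      using \<open>0 < c\<close> by simp
    then show "(?P has_vector_derivative C / (e + c * (t - a)) - K) (at t within {a..b})"
      by (simp add: has_real_derivative_iff_has_vector_derivative[symmetric] has_field_derivative_at_within)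
  qed (use assms in simp)
  then have "?P b - ?P a \<le> integral {a..b} f"
    using f_cont bound by (intro has_integral_le[OF _ integrable_integral] integrable_continuous_interval)
  moreover have "ln (c * (b - a)) \<le> ln (e + c * (b - a))"
    using assms by (subst ln_le_cancel_iff) (simp_all add: add_pos_pos)
  then have "C / c * ln (c * (b - a)) \<le> C / c * ln (e + c * (b - a))"
    using assms by (intro mult_left_mono) auto
  ultimately show ?thesis by (simp add: algebra_simps)
qed

lemma unique_root_of_decreasing:
  fixes f f' :: "real \<Rightarrow> real"
  assumes deriv: "\<And>x. a < x \<Longrightarrow> (f has_real_derivative f' x) (at x)"
    and neg: "\<And>x. a < x \<Longrightarrow> f' x < 0"
    and lim_a: "filterlim f at_top (at_right a)" and lim_top: "filterlim f at_bot at_top"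
  shows "\<exists>r>a. f r = 0 \<and> (\<forall>x>a. f x = 0 \<longrightarrow> x = r)"
proof -
  have decreasing: "f y < f x" if "a < x" "x < y" for x y
  proof (rule DERIV_neg_imp_decreasing[OF \<open>x < y\<close>])
    fix z assume "x \<le> z"
    then show "\<exists>d. (f has_real_derivative d) (at z) \<and> d < 0"
      using \<open>a < x\<close> deriv neg by (intro exI[of _ "f' z"]) auto
  qed
  have "\<forall>\<^sub>F x in at_right a. a < x \<and> 0 < f x"
    using lim_a by (auto simp: eventually_at_right_less filterlim_at_top_dense intro: eventually_conj)
  then obtain x1 where x1: "a < x1" "0 < f x1"
    using eventually_happens' trivial_limit_at_right_real by blast
  have "\<forall>\<^sub>F x in at_top. x1 < x \<and> f x < 0"
    using lim_top by (auto simp: filterlim_at_bot_dense intro: eventually_conj eventually_gt_at_top)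
  then obtain x2 where x2: "x1 < x2" "f x2 < 0"
    using eventually_happens' trivial_limit_at_top_linorder by blast
  have "continuous_on {x1..x2} f"
    using x1 by (intro continuous_at_imp_continuous_on ballI DERIV_isCont[OF deriv]) auto
  then obtain r where "x1 \<le> r" "f r = 0"
    using IVT2'[of f x2 0 x1] x1 x2 by force
  moreover have "x = r" if "a < x" "f x = 0" for x
    using decreasing[of x r] decreasing[of r x] that x1 \<open>x1 \<le> r\<close> \<open>f r = 0\<close>
    by (cases x r rule: linorder_cases) auto
  ultimately show ?thesis using x1 by (intro exI[of _ r]) auto
qed

definition F_integrand :: "real \<Rightarrow> real \<Rightarrow> real" where
  "F_integrand E x = (2 - x\<^sup>2) / sqrt (E - (x\<^sup>2 / 2 - 1)\<^sup>2)"

definition G_integrand :: "real \<Rightarrow> real \<Rightarrow> real" where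
  "G_integrand s t = sqrt 2 * (2 - 2 * (s + 1) * (sin t)\<^sup>2) / sqrt (s - 1 + (s + 1) * (sin t)\<^sup>2)"

definition G :: "real \<Rightarrow> real" where
  "G s = integral {0..pi/2} (G_integrand s)"

lemma F_eq_integral:
  "F E = integral {sqrt (max (2 - 2 * sqrt E) 0)..sqrt (2 + 2 * sqrt E)} (F_integrand E)"
  by (simp add: F_def F_integrand_def[abs_def])

lemma G_denominator_pos:
  fixes s t :: real
  assumes "1 < s" shows "0 < s - 1 + (s + 1) * (sin t)\<^sup>2"
proof -
  have "0 \<le> s + 1" using assms by simp
  then have "0 \<le> (s + 1) * (sin t)\<^sup>2" by simp
  then show ?thesis using assms by linarith
qed

lemma continuous_on_G_integrand:
  fixes s :: real
  assumes "1 < s" shows "continuous_on A (G_integrand s)"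
proof -
  have "s - 1 + (s + 1) * (sin t)\<^sup>2 \<noteq> 0" for t
    using G_denominator_pos[OF assms, of t] by linarith
  then show ?thesis unfolding G_integrand_def by (intro continuous_intros) auto
qed

lemma G_integrand_substitution:
  assumes s: "1 < s" and x: "0 \<le> x" "x < sqrt (2 + 2 * s)"
  shows "1 / sqrt (2 + 2 * s) / sqrt (1 - (x / sqrt (2 + 2 * s))\<^sup>2)
           * G_integrand s (arcsin (x / sqrt (2 + 2 * s))) = F_integrand (s\<^sup>2) x"
proof -
  define c where "c = sqrt (2 + 2 * s)"
  have c: "0 < c" "c\<^sup>2 = 2 + 2 * s" using s by (auto simp: c_def)
  have "0 \<le> x / c" "x / c < 1" using x c by (simp_all add: c_def)
  then have sin_arcsin: "sin (arcsin (x / c)) = x / c" by (intro sin_arcsin) auto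
  have "x\<^sup>2 < c\<^sup>2" using x c by (intro power_strict_mono) (auto simp: c_def)
  define A where "A = 2 + 2 * s - x\<^sup>2"
  define B where "B = s - 1 + x\<^sup>2 / 2"
  have "0 < A" "0 < B" using \<open>x\<^sup>2 < c\<^sup>2\<close> c s by (auto simp: A_def B_def add_pos_nonneg)
  have sin_sq: "(s + 1) * (sin (arcsin (x / c)))\<^sup>2 = x\<^sup>2 / 2"
    using c s by (simp add: sin_arcsin power_divide field_simps)
  have G_integrand_eq: "G_integrand s (arcsin (x / c)) = sqrt 2 * (2 - x\<^sup>2) / sqrt B"
    unfolding G_integrand_def B_def mult.assoc sin_sq by simp
  have "sqrt (1 - (x / c)\<^sup>2) * c = sqrt ((1 - (x / c)\<^sup>2) * c\<^sup>2)"
    using c(1) by (simp add: real_sqrt_mult)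
  also have "(1 - (x / c)\<^sup>2) * c\<^sup>2 = A"
    using c s by (simp add: A_def power_divide field_simps)
  finally have factor_eq: "1 / c / sqrt (1 - (x / c)\<^sup>2) = 1 / sqrt A"
    by (simp add: divide_divide_eq_left mult.commute)
  have F_integrand_eq: "F_integrand (s\<^sup>2) x = (2 - x\<^sup>2) / (sqrt A * sqrt B / sqrt 2)"
  proof -
    have AB: "s\<^sup>2 - (x\<^sup>2 / 2 - 1)\<^sup>2 = A * B / 2"
      by (simp add: A_def B_def power2_eq_square field_simps)
    show ?thesis unfolding F_integrand_def AB by (simp add: real_sqrt_mult real_sqrt_divide)
  qed
  have "1 / c / sqrt (1 - (x / c)\<^sup>2) * G_integrand s (arcsin (x / c))
      = 1 / sqrt A * (sqrt 2 * (2 - x\<^sup>2) / sqrt B)"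
    by (simp only: factor_eq G_integrand_eq)
  also have "\<dots> = F_integrand (s\<^sup>2) x"
    using \<open>0 < A\<close> \<open>0 < B\<close> by (simp add: F_integrand_eq field_simps)
  finally show ?thesis unfolding c_def .
qed

lemma F_eq_G:
  assumes "1 < E"
  shows "F E = G (sqrt E)"
proof -
  define s where "s = sqrt E"
  define c where "c = sqrt (2 + 2 * s)"
  have s: "1 < s" "E = s\<^sup>2" using assms by (auto simp: s_def)
  then have c: "0 < c" by (simp add: c_def)
  have "((\<lambda>x. 1 / c / sqrt (1 - (x / c)\<^sup>2) * G_integrand s (arcsin (x / c)))
          has_integral integral {arcsin (0 / c)..arcsin (c / c)} (G_integrand s)) {0..c}"
    (is "(?substituted has_integral _) _")
  proof (rule has_integral_arcsin_substitution)
    show "(\<lambda>x. x / c) ` {0..c} \<subseteq> {0 / c..c / c}"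
      using c by (auto simp: divide_right_mono)
    fix x assume "x \<in> {0<..<c}"
    then show "\<bar>x / c\<bar> < 1 \<and> ((\<lambda>x. x / c) has_real_derivative 1 / c) (at x)"
      using c by (auto intro!: derivative_eq_intros)
  qed (use c s continuous_on_G_integrand in \<open>auto intro!: continuous_intros\<close>)
  moreover have "integral {arcsin (0 / c)..arcsin (c / c)} (G_integrand s) = G s"
    using c by (simp add: G_def)
  ultimately have "(?substituted has_integral G s) {0..c}" by simp
  then have "(F_integrand E has_integral G s) {0..c}"
  proof (rule has_integral_spike_finite[rotated 2])
    fix x assume "x \<in> {0..c} - {c}"
    then have "0 \<le> x" "x < sqrt (2 + 2 * s)" by (auto simp: c_def)
    then show "F_integrand E x = ?substituted x"
      using G_integrand_substitution[OF s(1)] s(2) by (simp add: c_def)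
  qed simp
  moreover have "sqrt (max (2 - 2 * s) 0) = 0" using s by simp
  ultimately show ?thesis
    by (simp add: F_eq_integral s_def[symmetric] c_def[symmetric] integral_unique)
qed

definition G_integrand_deriv :: "real \<Rightarrow> real \<Rightarrow> real" where
  "G_integrand_deriv s t = - sqrt 2 * (s * (sin t)\<^sup>2 * (1 + (sin t)\<^sup>2) + (1 - (sin t)\<^sup>2)\<^sup>2)
     / ((s - 1 + (s + 1) * (sin t)\<^sup>2) * sqrt (s - 1 + (s + 1) * (sin t)\<^sup>2))"

definition G' :: "real \<Rightarrow> real" where
  "G' s = integral {0..pi/2} (G_integrand_deriv s)"

lemma G_integrand_has_derivative:
  assumes "1 < s"
  shows "((\<lambda>s. G_integrand s t) has_real_derivative G_integrand_deriv s t) (at s)"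
proof -
  define S where "S = (sin t)\<^sup>2"
  define D where "D = s - 1 + (s + 1) * S"
  have cancel_2: "sqrt 2 * (-2 * Z) / (2 * W) = - sqrt 2 * Z / W" for Z W :: real
    by simp
  have "0 < D" unfolding D_def S_def using assms by (rule G_denominator_pos)
  then have "((\<lambda>s. sqrt 2 * (2 - 2 * (s + 1) * S) / sqrt (s - 1 + (s + 1) * S)) has_real_derivative
      (sqrt 2 * (- 2 * S) * sqrt D - sqrt 2 * (2 - 2 * (s + 1) * S) * ((1 + S) / (2 * sqrt D)))
        / (sqrt D)\<^sup>2) (at s)"
    unfolding D_def by (auto intro!: derivative_eq_intros simp: power2_eq_square) (simp add: field_simps)
  also have "(sqrt 2 * (- 2 * S) * sqrt D - sqrt 2 * (2 - 2 * (s + 1) * S) * ((1 + S) / (2 * sqrt D)))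
        / (sqrt D)\<^sup>2 = sqrt 2 * ((-4 * S) * D - (2 - 2 * (s + 1) * S) * (1 + S)) / (2 * (D * sqrt D))"
    using \<open>0 < D\<close> by (simp add: field_simps power2_eq_square)
  also have "(-4 * S) * D - (2 - 2 * (s + 1) * S) * (1 + S) = -2 * (s * S * (1 + S) + (1 - S)\<^sup>2)"
    by (simp add: D_def algebra_simps power2_eq_square)
  also have "sqrt 2 * (-2 * (s * S * (1 + S) + (1 - S)\<^sup>2)) / (2 * (D * sqrt D))
      = - sqrt 2 * (s * S * (1 + S) + (1 - S)\<^sup>2) / (D * sqrt D)"
    by (rule cancel_2)
  also have "\<dots> = G_integrand_deriv s t"
    by (simp add: G_integrand_deriv_def S_def D_def)
  finally show ?thesis unfolding G_integrand_def S_def .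
qed

lemma G_integrand_deriv_neg:
  fixes s t :: real
  assumes "1 < s"
  shows "G_integrand_deriv s t < 0"
proof -
  define S where "S = (sin t)\<^sup>2"
  define D where "D = s - 1 + (s + 1) * S"
  have "0 < D" unfolding D_def S_def using assms by (rule G_denominator_pos)
  have "0 \<le> S" by (simp add: S_def)
  have "0 < s * S * (1 + S) + (1 - S)\<^sup>2"
  proof (cases "S = 0")
    case False
    then have "0 < S" using \<open>0 \<le> S\<close> by simp
    then show ?thesis using assms by (intro add_pos_nonneg) auto
  qed simp
  then show ?thesis
    using \<open>0 < D\<close> unfolding G_integrand_deriv_def S_def[symmetric] D_def[symmetric]
    by (simp add: divide_neg_pos)
qed

lemma continuous_on_G_integrand_deriv:
  "continuous_on ({1<..} \<times> A) (\<lambda>(s, t). G_integrand_deriv s t)"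
proof -
  have "fst p - 1 + (fst p + 1) * (sin (snd p))\<^sup>2 \<noteq> 0" if "p \<in> {1<..} \<times> A" for p :: "real \<times> real"
    using G_denominator_pos[of "fst p" "snd p"] that by force
  then show ?thesis
    unfolding case_prod_beta G_integrand_deriv_def by (intro continuous_intros) auto
qed

lemma G_has_derivative:
  assumes "1 < s"
  shows "(G has_real_derivative G' s) (at s)"
proof -
  have "((\<lambda>s. integral (cbox 0 (pi/2)) (G_integrand s)) has_real_derivative
      integral (cbox 0 (pi/2)) (G_integrand_deriv s)) (at s within {1<..})"
  proof (rule leibniz_rule_field_derivative)
    fix s t :: real assume "s \<in> {1<..}"
    then show "((\<lambda>s. G_integrand s t) has_real_derivative G_integrand_deriv s t) (at s within {1<..})"
      by (simp add: G_integrand_has_derivative has_field_derivative_at_within)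
  next
    fix s :: real assume "s \<in> {1<..}"
    then show "G_integrand s integrable_on cbox 0 (pi/2)"
      by (simp add: integrable_continuous_interval continuous_on_G_integrand)
  qed (use assms continuous_on_G_integrand_deriv in auto)
  then show ?thesis
    using assms at_within_open[of s "{1<..}"] by (simp add: G_def[abs_def] G'_def cbox_interval)
qed

lemma continuous_on_G': "continuous_on {1<..} G'"
  using integral_continuous_on_param[OF continuous_on_G_integrand_deriv[of "cbox 0 (pi/2)"]]
  by (simp add: G'_def cbox_interval)

lemma G'_neg:
  assumes "1 < s"
  shows "G' s < 0"
proof -
  have "continuous_on {0..pi/2} (\<lambda>t. (\<lambda>(s, t). G_integrand_deriv s t) (s, t))"
    by (rule continuous_on_compose2[OF continuous_on_G_integrand_deriv[of "{0..pi/2}"]])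
      (use assms in \<open>auto intro!: continuous_intros\<close>)
  then have "continuous_on {0..pi/2} (G_integrand_deriv s)" by simp
  then have "integral {0..pi/2} (G_integrand_deriv s) < integral {0..pi/2} (\<lambda>_. 0)"
    using assms G_integrand_deriv_neg pi_gt_zero by (intro integral_less_real) (auto simp: not_le)
  then show ?thesis by (simp add: G'_def)
qed

lemma G_integrand_le:
  fixes s t :: real
  assumes "2 \<le> s"
  shows "G_integrand s t \<le> 2 * sqrt 2 - 2 * sqrt s * (sin t)\<^sup>2"
proof -
  define S where "S = (sin t)\<^sup>2"
  define D where "D = s - 1 + (s + 1) * S"
  have S: "0 \<le> S" "S \<le> 1" unfolding S_def by (auto simp: abs_square_le_1)
  have "(s + 1) * S \<le> s + 1" using mult_left_mono[of S 1 "s + 1"] S assms by simp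
  moreover have "0 \<le> (s + 1) * S" using S assms by simp
  ultimately have "1 \<le> D" "D \<le> 2 * s" using assms unfolding D_def by linarith+
  then have sqrt_D: "1 \<le> sqrt D" "sqrt D \<le> sqrt 2 * sqrt s"
    by (auto simp: real_sqrt_mult[symmetric])
  have "2 * sqrt 2 / sqrt D \<le> 2 * sqrt 2" using sqrt_D by (simp add: divide_le_eq)
  moreover have "2 * sqrt s * S * sqrt D \<le> 2 * sqrt 2 * (s + 1) * S"
  proof -
    have "2 * sqrt s * S * sqrt D \<le> 2 * sqrt s * S * (sqrt 2 * sqrt s)"
      using sqrt_D S assms by (intro mult_left_mono) auto
    also have "\<dots> = 2 * sqrt 2 * s * S" using assms by (simp add: algebra_simps)
    also have "\<dots> \<le> 2 * sqrt 2 * (s + 1) * S" using S by (simp add: mult_left_mono mult_right_mono)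
    finally show ?thesis .
  qed
  then have "2 * sqrt s * S \<le> 2 * sqrt 2 * (s + 1) * S / sqrt D"
    using sqrt_D by (simp add: le_divide_eq)
  moreover have "G_integrand s t = 2 * sqrt 2 / sqrt D - 2 * sqrt 2 * (s + 1) * S / sqrt D"
    unfolding G_integrand_def S_def[symmetric] D_def[symmetric] by (simp add: diff_divide_distrib algebra_simps)
  ultimately show ?thesis unfolding S_def by linarith
qed

lemma has_integral_sin_squared: "((\<lambda>t. (sin t)\<^sup>2) has_integral pi / 4) {0..pi/2}"
proof -
  have "((\<lambda>t. (sin t)\<^sup>2) has_integral (pi/2 / 2 - sin (2 * (pi/2)) / 4) - (0 / 2 - sin (2 * 0) / 4)) {0..pi/2}"
  proof (rule fundamental_theorem_of_calculus)
    fix t :: real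
    have "((\<lambda>t. t / 2 - sin (2 * t) / 4) has_real_derivative 1 / 2 - cos (2 * t) / 2) (at t)"
      by (auto intro!: derivative_eq_intros)
    moreover have "1 / 2 - cos (2 * t) / 2 = (sin t)\<^sup>2"
      unfolding cos_double_sin by (simp add: field_simps)
    ultimately have "((\<lambda>t. t / 2 - sin (2 * t) / 4) has_real_derivative (sin t)\<^sup>2) (at t)"
      by simp
    then show "((\<lambda>t. t / 2 - sin (2 * t) / 4) has_vector_derivative (sin t)\<^sup>2) (at t within {0..pi/2})"
      by (simp add: has_real_derivative_iff_has_vector_derivative[symmetric] has_field_derivative_at_within)
  qed simp
  then show ?thesis by simp
qed

lemma G_le:
  assumes "2 \<le> s"
  shows "G s \<le> sqrt 2 * pi - pi / 2 * sqrt s"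
proof -
  have "(G_integrand s has_integral G s) {0..pi/2}"
    unfolding G_def using assms
    by (intro integrable_integral integrable_continuous_interval continuous_on_G_integrand) auto
  moreover have "((\<lambda>t. 2 * sqrt 2 - 2 * sqrt s * (sin t)\<^sup>2) has_integral
      sqrt 2 * pi - pi / 2 * sqrt s) {0..pi/2}"
    using has_integral_diff[OF has_integral_const_real[of "2 * sqrt 2" 0 "pi/2"]
        has_integral_mult_right[OF has_integral_sin_squared, of "2 * sqrt s"]]
    by (simp add: mult.commute)
  ultimately show ?thesis
    by (rule has_integral_le) (use assms G_integrand_le in blast)
qed

lemma sin_squared_le: "(sin t)\<^sup>2 \<le> (t::real)\<^sup>2"
  using power_mono[OF abs_sin_x_le_abs_x, of t 2] by simp

lemma G_integrand_ge:
  fixes s t :: real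
  assumes s: "1 < s" "s \<le> 2" and "0 \<le> t"
  shows "2 * sqrt 2 / (sqrt (s - 1) + 2 * t) - 2 * sqrt 6 \<le> G_integrand s t"
proof -
  define T where "T = (s + 1) * (sin t)\<^sup>2"
  define D where "D = s - 1 + T"
  have "0 \<le> T" using s by (simp add: T_def)
  have "T \<le> 3 * t\<^sup>2"
    using mult_mono[of "s + 1" 3 "(sin t)\<^sup>2" "t\<^sup>2"] s sin_squared_le[of t] by (simp add: T_def)
  moreover have "(2 * t)\<^sup>2 = 4 * t\<^sup>2" by (simp add: power_mult_distrib)
  ultimately have "T \<le> (2 * t)\<^sup>2" using zero_le_power2[of t] by linarith
  then have "sqrt T \<le> 2 * t" using \<open>0 \<le> t\<close> by (intro real_le_lsqrt) auto
  have "0 < D" unfolding D_def T_def using s(1) by (rule G_denominator_pos)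
  have "T \<le> 3" using mult_mono[of "s + 1" 3 "(sin t)\<^sup>2" 1] s by (simp add: T_def abs_square_le_1)
  have "sqrt T * sqrt T \<le> sqrt T * sqrt D"
    using s \<open>0 \<le> T\<close> by (intro mult_left_mono) (auto simp: D_def)
  then have "T / sqrt D \<le> sqrt T"
    using \<open>0 \<le> T\<close> \<open>0 < D\<close> by (simp add: divide_le_eq)
  also have "\<dots> \<le> sqrt 3" using \<open>T \<le> 3\<close> by simp
  finally have "T / sqrt D \<le> sqrt 3" .
  then have bound_T: "2 * sqrt 2 * T / sqrt D \<le> 2 * sqrt 6"
    using mult_left_mono[of "T / sqrt D" "sqrt 3" "2 * sqrt 2"] real_sqrt_mult[of 2 3] by simp
  have "sqrt D \<le> sqrt (s - 1) + sqrt T"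
    unfolding D_def using s \<open>0 \<le> T\<close> by (intro sqrt_add_le_add_sqrt) auto
  then have sqrt_D_le: "sqrt D \<le> sqrt (s - 1) + 2 * t" using \<open>sqrt T \<le> 2 * t\<close> by linarith
  have "0 < sqrt D" using \<open>0 < D\<close> by simp
  then have "0 < sqrt (s - 1) + 2 * t" using sqrt_D_le by linarith
  then have "0 < (sqrt (s - 1) + 2 * t) * sqrt D" using \<open>0 < sqrt D\<close> by (rule mult_pos_pos)
  then have bound_D: "2 * sqrt 2 / (sqrt (s - 1) + 2 * t) \<le> 2 * sqrt 2 / sqrt D"
    using sqrt_D_le by (intro divide_left_mono) auto
  have "G_integrand s t = 2 * sqrt 2 / sqrt D - 2 * sqrt 2 * T / sqrt D"
    unfolding G_integrand_def T_def D_def by (simp add: diff_divide_distrib algebra_simps)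
  then show ?thesis using bound_T bound_D by linarith
qed

lemma G_ge:
  assumes "1 < s" "s \<le> 2"
  shows "sqrt 2 * (ln pi - ln (sqrt (s - 1))) - sqrt 6 * pi \<le> G s"
proof -
  have "2 * sqrt 2 / 2 * (ln (2 * (pi/2 - 0)) - ln (sqrt (s - 1))) - 2 * sqrt 6 * (pi/2 - 0)
      \<le> integral {0..pi/2} (G_integrand s)"
    using assms G_integrand_ge by (intro integral_ge_log_bound continuous_on_G_integrand) auto
  then show ?thesis by (simp add: G_def)
qed

definition H_integrand :: "real \<Rightarrow> real \<Rightarrow> real" where
  "H_integrand s t = - sqrt 2 * s * sin t / sqrt (1 + s * sin t)"

definition H :: "real \<Rightarrow> real" where
  "H s = integral {-(pi/2)..pi/2} (H_integrand s)"

lemma H_denominator_pos: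
  fixes s t :: real
  assumes "0 \<le> s" "s < 1"
  shows "0 < 1 + s * sin t"
proof -
  have "- s \<le> s * sin t" using mult_left_mono[of "-1" "sin t" s] assms by simp
  then show ?thesis using assms by linarith
qed

lemma continuous_on_H_integrand:
  fixes s :: real
  assumes "0 \<le> s" "s < 1"
  shows "continuous_on A (H_integrand s)"
proof -
  have "1 + s * sin t \<noteq> 0" for t
    using H_denominator_pos[OF assms, of t] by linarith
  then show ?thesis unfolding H_integrand_def by (intro continuous_intros) auto
qed

lemma H_integrand_substitution:
  assumes s: "0 < s" "s < 1" and "0 < x" and interior: "\<bar>(x\<^sup>2 / 2 - 1) / s\<bar> < 1"
  shows "x / s / sqrt (1 - ((x\<^sup>2 / 2 - 1) / s)\<^sup>2) * H_integrand s (arcsin ((x\<^sup>2 / 2 - 1) / s))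
           = F_integrand (s\<^sup>2) x"
proof -
  define y where "y = (x\<^sup>2 / 2 - 1) / s"
  define u where "u = x\<^sup>2 / 2 - 1"
  have "-1 < y" "y < 1" using interior unfolding y_def abs_less_iff by auto
  then have "sin (arcsin y) = y" by (intro sin_arcsin) auto
  then have "s * sin (arcsin y) = u"
    using s by (simp add: y_def u_def)
  then have "H_integrand s (arcsin y) = - sqrt 2 * u / sqrt (x\<^sup>2 / 2)"
    by (simp add: H_integrand_def mult.assoc u_def)
  also have "\<dots> = (2 - x\<^sup>2) / x"
    using \<open>0 < x\<close> by (simp add: real_sqrt_divide u_def field_simps)
  finally have H_integrand_eq: "H_integrand s (arcsin y) = (2 - x\<^sup>2) / x" .
  have "sqrt (1 - y\<^sup>2) * s = sqrt ((1 - y\<^sup>2) * s\<^sup>2)"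
    using s by (simp add: real_sqrt_mult)
  also have "(1 - y\<^sup>2) * s\<^sup>2 = s\<^sup>2 - u\<^sup>2"
    using s by (simp add: y_def u_def power_divide field_simps)
  finally have sqrt_eq: "sqrt (1 - y\<^sup>2) * s = sqrt (s\<^sup>2 - u\<^sup>2)" .
  have "y\<^sup>2 < 1" using interior by (simp add: y_def abs_square_less_1)
  then have "x / s / sqrt (1 - y\<^sup>2) * H_integrand s (arcsin y) = (2 - x\<^sup>2) / (sqrt (1 - y\<^sup>2) * s)"
    using \<open>0 < x\<close> s by (simp add: H_integrand_eq field_simps)
  then show ?thesis unfolding sqrt_eq by (simp add: F_integrand_def y_def u_def)
qed

lemma F_eq_H:
  assumes "0 < E" "E < 1"
  shows "F E = H (sqrt E)"
proof -
  define s where "s = sqrt E"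
  define a where "a = sqrt (2 - 2 * s)"
  define b where "b = sqrt (2 + 2 * s)"
  define \<phi> where "\<phi> x = (x\<^sup>2 / 2 - 1) / s" for x
  have s: "0 < s" "s < 1" "E = s\<^sup>2" using assms by (auto simp: s_def)
  then have "0 < a" "a\<^sup>2 = 2 - 2 * s" "b\<^sup>2 = 2 + 2 * s" "a \<le> b" by (auto simp: a_def b_def)
  then have ends: "\<phi> a = -1" "\<phi> b = 1" using s by (simp_all add: \<phi>_def field_simps)
  have \<phi>_mono: "\<phi> x \<le> \<phi> y" if "0 \<le> x" "x \<le> y" for x y
    using s that by (simp add: \<phi>_def divide_right_mono power_mono)
  have \<phi>_interior: "\<bar>\<phi> x\<bar> < 1" if "x \<in> {a<..<b}" for x
  proof -
    have "a\<^sup>2 < x\<^sup>2" "x\<^sup>2 < b\<^sup>2" using that \<open>0 < a\<close> by (auto intro!: power_strict_mono)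
    then show ?thesis using s \<open>a\<^sup>2 = 2 - 2 * s\<close> \<open>b\<^sup>2 = 2 + 2 * s\<close>
      by (auto simp: \<phi>_def abs_less_iff field_simps)
  qed
  have "((\<lambda>x. x / s / sqrt (1 - (\<phi> x)\<^sup>2) * H_integrand s (arcsin (\<phi> x)))
          has_integral integral {arcsin (\<phi> a)..arcsin (\<phi> b)} (H_integrand s)) {a..b}"
    (is "(?substituted has_integral _) _")
  proof (rule has_integral_arcsin_substitution)
    show "\<phi> ` {a..b} \<subseteq> {\<phi> a..\<phi> b}"
      using \<phi>_mono \<open>0 < a\<close> by auto
    fix x assume "x \<in> {a<..<b}"
    then show "\<bar>\<phi> x\<bar> < 1 \<and> (\<phi> has_real_derivative x / s) (at x)"
      using \<phi>_interior s unfolding \<phi>_def by (auto intro!: derivative_eq_intros)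
  qed (use \<open>a \<le> b\<close> ends s continuous_on_H_integrand in \<open>auto simp: \<phi>_def intro!: continuous_intros\<close>)
  then have "(?substituted has_integral H s) {a..b}"
    by (simp add: ends H_def)
  then have "(F_integrand E has_integral H s) {a..b}"
  proof (rule has_integral_spike_finite[rotated 2])
    fix x assume "x \<in> {a..b} - {a, b}"
    then have "0 < x" "\<bar>\<phi> x\<bar> < 1" using \<open>0 < a\<close> \<phi>_interior by auto
    then show "F_integrand E x = ?substituted x"
      using H_integrand_substitution[OF s(1,2)] s(3) by (simp add: \<phi>_def)
  qed simp
  moreover have "sqrt (max (2 - 2 * s) 0) = a" using s by (simp add: a_def)
  ultimately show ?thesis
    by (simp add: F_eq_integral s_def[symmetric] b_def[symmetric] integral_unique)
qed

lemma one_plus_sin_le_square: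
  fixes t :: real
  assumes "0 \<le> t + pi/2"
  shows "1 + sin t \<le> (t + pi/2)\<^sup>2 / 2"
proof -
  have half: "2 * ((t + pi/2) / 2) = t + pi/2" by simp
  have "1 + sin t = 1 - cos (t + pi/2)" by (simp add: cos_add)
  also have "\<dots> = 2 * (sin ((t + pi/2) / 2))\<^sup>2"
    using cos_double_sin[of "(t + pi/2) / 2", unfolded half] by linarith
  also have "\<dots> \<le> 2 * ((t + pi/2) / 2)\<^sup>2" using sin_squared_le by simp
  finally show ?thesis by (simp add: power_divide)
qed

lemma H_integrand_ge:
  fixes s t :: real
  assumes s: "0 < s" "s < 1" and "-(pi/2) \<le> t"
  shows "sqrt 2 / (sqrt (1 - s) + (t + pi/2)) - 2 \<le> H_integrand s t"
proof -
  define z where "z = 1 + s * sin t"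
  have t: "0 \<le> t + pi/2" using assms by simp
  have "0 < z" unfolding z_def using s by (intro H_denominator_pos) auto
  have "s * sin t \<le> s" using mult_left_mono[of "sin t" 1 s] s by simp
  then have "z \<le> 2" using s unfolding z_def by linarith
  then have "sqrt z \<le> sqrt 2" by simp
  then have bound_1: "sqrt 2 * sqrt z \<le> 2"
    using mult_left_mono[of "sqrt z" "sqrt 2" "sqrt 2"] by simp
  have "0 \<le> 1 + sin t" using sin_ge_minus_one[of t] by linarith
  then have "s * (1 + sin t) \<le> 1 + sin t"
    using s by (intro mult_left_le_one_le) auto
  also have "\<dots> \<le> (t + pi/2)\<^sup>2"
    using one_plus_sin_le_square[OF t] zero_le_power2[of "t + pi/2"] by linarith
  finally have "z \<le> (1 - s) + (t + pi/2)\<^sup>2" by (simp add: z_def algebra_simps)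
  then have "sqrt z \<le> sqrt ((1 - s) + (t + pi/2)\<^sup>2)" by simp
  also have "\<dots> \<le> sqrt (1 - s) + sqrt ((t + pi/2)\<^sup>2)" using s by (intro sqrt_add_le_add_sqrt) auto
  finally have sqrt_z_le: "sqrt z \<le> sqrt (1 - s) + (t + pi/2)" using t by simp
  have "0 < sqrt z" using \<open>0 < z\<close> by simp
  then have "0 < sqrt (1 - s) + (t + pi/2)" using sqrt_z_le by linarith
  then have "0 < (sqrt (1 - s) + (t + pi/2)) * sqrt z" using \<open>0 < sqrt z\<close> by (rule mult_pos_pos)
  then have bound_2: "sqrt 2 / (sqrt (1 - s) + (t + pi/2)) \<le> sqrt 2 / sqrt z"
    using sqrt_z_le by (intro divide_left_mono) auto
  have "H_integrand s t = sqrt 2 * (1 - z) / sqrt z"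
    by (simp add: H_integrand_def z_def algebra_simps)
  also have "\<dots> = sqrt 2 / sqrt z - sqrt 2 * sqrt z"
    using \<open>0 < z\<close> by (simp add: field_simps)
  finally have "H_integrand s t = sqrt 2 / sqrt z - sqrt 2 * sqrt z" .
  then show ?thesis using bound_1 bound_2 by linarith
qed

lemma H_ge:
  assumes "0 < s" "s < 1"
  shows "sqrt 2 * (ln pi - ln (sqrt (1 - s))) - 2 * pi \<le> H s"
proof -
  have "sqrt 2 / 1 * (ln (1 * (pi/2 - -(pi/2))) - ln (sqrt (1 - s))) - 2 * (pi/2 - -(pi/2))
      \<le> integral {-(pi/2)..pi/2} (H_integrand s)"
    using assms H_integrand_ge
    by (intro integral_ge_log_bound continuous_on_H_integrand) (auto simp: add.commute)
  then show ?thesis by (simp add: H_def)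
qed

lemma H_integrand_by_parts:
  fixes s t :: real
  assumes "0 \<le> s" "s < 1"
  shows "((\<lambda>t. sqrt 2 * s * cos t / sqrt (1 + s * sin t)) has_real_derivative
      H_integrand s t - sqrt 2 / 2 * s\<^sup>2 * (cos t)\<^sup>2 / ((1 + s * sin t) * sqrt (1 + s * sin t))) (at t)"
proof -
  define z where "z = 1 + s * sin t"
  have "0 < z" unfolding z_def using assms by (rule H_denominator_pos)
  then have "((\<lambda>t. sqrt 2 * s * cos t / sqrt (1 + s * sin t)) has_real_derivative
      (sqrt 2 * s * (- sin t) * sqrt z - sqrt 2 * s * cos t * (s * cos t / (2 * sqrt z))) / (sqrt z)\<^sup>2) (at t)"
    unfolding z_def by (auto intro!: derivative_eq_intros simp: power2_eq_square) (simp add: field_simps)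
  moreover have "(sqrt 2 * s * (- sin t) * sqrt z - sqrt 2 * s * cos t * (s * cos t / (2 * sqrt z))) / (sqrt z)\<^sup>2
      = - sqrt 2 * s * sin t / sqrt z - sqrt 2 / 2 * s\<^sup>2 * (cos t)\<^sup>2 / (z * sqrt z)"
    using \<open>0 < z\<close> by (simp add: field_simps power2_eq_square)
  ultimately show ?thesis by (simp add: H_integrand_def z_def)
qed

lemma H_pos:
  assumes "0 < s" "s < 1"
  shows "0 < H s"
proof -
  define R where "R t = sqrt 2 / 2 * s\<^sup>2 * (cos t)\<^sup>2 / ((1 + s * sin t) * sqrt (1 + s * sin t))" for t
  have "((\<lambda>t. H_integrand s t - R t) has_integral
      sqrt 2 * s * cos (pi/2) / sqrt (1 + s * sin (pi/2))
        - sqrt 2 * s * cos (-(pi/2)) / sqrt (1 + s * sin (-(pi/2)))) {-(pi/2)..pi/2}"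
    using assms H_integrand_by_parts
    by (intro fundamental_theorem_of_calculus)
      (auto simp: R_def has_real_derivative_iff_has_vector_derivative[symmetric] has_field_derivative_at_within)
  then have boundary_term: "((\<lambda>t. H_integrand s t - R t) has_integral 0) {-(pi/2)..pi/2}"
    by simp
  have "1 + s * sin t \<noteq> 0" for t using H_denominator_pos[of s t] assms by simp
  then have "continuous_on {-(pi/2)..pi/2} R"
    unfolding R_def by (intro continuous_intros) auto
  moreover have "0 < R t" if "t \<in> {-(pi/2)<..<pi/2}" for t
    using that assms H_denominator_pos[of s t] cos_gt_zero_pi[of t] by (simp add: R_def)
  ultimately have "integral {-(pi/2)..pi/2} (\<lambda>_. 0) < integral {-(pi/2)..pi/2} R"
    using pi_gt_zero by (intro integral_less_real) (auto simp: not_le)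
  moreover have "(R has_integral integral {-(pi/2)..pi/2} R) {-(pi/2)..pi/2}"
    using \<open>continuous_on {-(pi/2)..pi/2} R\<close> by (intro integrable_integral integrable_continuous_interval)
  from has_integral_add[OF boundary_term this]
  have "(H_integrand s has_integral integral {-(pi/2)..pi/2} R) {-(pi/2)..pi/2}"
    by simp
  ultimately show ?thesis by (simp add: H_def integral_unique)
qed

lemma F_has_derivative:
  assumes "1 < E"
  shows "(F has_real_derivative G' (sqrt E) / (2 * sqrt E)) (at E)"
proof -
  have "((\<lambda>E. G (sqrt E)) has_real_derivative G' (sqrt E) * (inverse (sqrt E) / 2)) (at E)"
    using assms by (intro DERIV_chain2[OF G_has_derivative DERIV_real_sqrt]) auto
  then have "((\<lambda>E. G (sqrt E)) has_real_derivative G' (sqrt E) / (2 * sqrt E)) (at E)"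
    by (simp add: inverse_eq_divide mult.commute)
  then show ?thesis
    by (rule has_field_derivative_transform_within_open[where S="{1<..}"]) (use assms F_eq_G in auto)
qed

lemma deriv_F:
  assumes "1 < E"
  shows "deriv F E = G' (sqrt E) / (2 * sqrt E)"
  using F_has_derivative[OF assms] by (rule DERIV_imp_deriv)

lemma deriv_F_neg:
  assumes "1 < E"
  shows "deriv F E < 0"
  using G'_neg[of "sqrt E"] assms by (simp add: deriv_F divide_neg_pos)

lemma continuous_on_deriv_F: "continuous_on {1<..} (deriv F)"
proof -
  have "continuous_on {1<..} (\<lambda>E. G' (sqrt E) / (2 * sqrt E))"
    by (intro continuous_intros continuous_on_compose2[OF continuous_on_G']) auto
  then show ?thesis by (rule continuous_on_eq) (simp add: deriv_F)
qed

lemma F_pos: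
  assumes "0 < E" "E < 1"
  shows "0 < F E"
  using F_eq_H[OF assms] H_pos[of "sqrt E"] assms by simp

lemma filterlim_F_at_bot: "filterlim F at_bot at_top"
proof (rule filterlim_at_bot_mono)
  show "filterlim (\<lambda>E. sqrt 2 * pi - pi / 2 * sqrt (sqrt E)) at_bot at_top"
    by real_asymp
  show "\<forall>\<^sub>F E in at_top. F E \<le> sqrt 2 * pi - pi / 2 * sqrt (sqrt E)"
    using eventually_ge_at_top[of 4]
  proof (rule eventually_mono)
    fix E :: real assume "4 \<le> E"
    then have "2 \<le> sqrt E" using real_sqrt_le_mono[of 4 E] by simp
    then show "F E \<le> sqrt 2 * pi - pi / 2 * sqrt (sqrt E)"
      using F_eq_G[of E] G_le[of "sqrt E"] \<open>4 \<le> E\<close> by simp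
  qed
qed

lemma filterlim_F_at_right_1: "filterlim F at_top (at_right 1)"
proof (rule filterlim_at_top_mono)
  show "filterlim (\<lambda>E. sqrt 2 * (ln pi - ln (sqrt (sqrt E - 1))) - sqrt 6 * pi) at_top (at_right 1)"
    by real_asymp
  show "\<forall>\<^sub>F E in at_right 1. sqrt 2 * (ln pi - ln (sqrt (sqrt E - 1))) - sqrt 6 * pi \<le> F E"
    using eventually_at_right_real[of 1 4]
  proof (rule eventually_mono)
    fix E :: real assume "E \<in> {1<..<4}"
    then have "1 < sqrt E" "sqrt E < 2" using real_sqrt_less_mono[of E 4] by auto
    then show "sqrt 2 * (ln pi - ln (sqrt (sqrt E - 1))) - sqrt 6 * pi \<le> F E"
      using F_eq_G[of E] G_ge[of "sqrt E"] by simp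
  qed simp
qed

lemma filterlim_F_at_left_1: "filterlim F at_top (at_left 1)"
proof (rule filterlim_at_top_mono)
  show "filterlim (\<lambda>E. sqrt 2 * (ln pi - ln (sqrt (1 - sqrt E))) - 2 * pi) at_top (at_left 1)"
    by real_asymp
  show "\<forall>\<^sub>F E in at_left 1. sqrt 2 * (ln pi - ln (sqrt (1 - sqrt E))) - 2 * pi \<le> F E"
    using eventually_at_left_real[of 0 1]
  proof (rule eventually_mono)
    fix E :: real assume "E \<in> {0<..<1}"
    then show "sqrt 2 * (ln pi - ln (sqrt (1 - sqrt E))) - 2 * pi \<le> F E"
      using F_eq_H[of E] H_ge[of "sqrt E"] by simp
  qed simp
qed

theorem proposition3p12:
  shows "(\<forall>E>1. F differentiable (at E)) \<and> continuous_on {1<..} (deriv F)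
      \<and> (\<forall>E>1. deriv F E < 0)
    \<and> filterlim F at_bot at_top
    \<and> filterlim F at_top (at_right 1) \<and> filterlim F at_top (at_left 1)
    \<and> (\<exists>Ec. Ec > 1 \<and> F Ec = 0 \<and> (\<forall>E>1. F E = 0 \<longrightarrow> E = Ec) \<and> deriv F Ec < 0)
    \<and> (\<forall>E. 0 < E \<and> E < 1 \<longrightarrow> F E > 0)"
proof -
  have F_deriv: "(F has_real_derivative deriv F E) (at E)" if "1 < E" for E
    using F_has_derivative[OF that] by (simp add: deriv_F[OF that])
  obtain Ec where Ec: "1 < Ec" "F Ec = 0" "\<forall>E>1. F E = 0 \<longrightarrow> E = Ec"
    using unique_root_of_decreasing[OF F_deriv deriv_F_neg filterlim_F_at_right_1 filterlim_F_at_bot]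
    by blast
  show ?thesis
  proof (intro conjI)
    show "\<forall>E>1. F differentiable (at E)"
      using F_deriv real_differentiable_def by blast
    show "\<exists>Ec. Ec > 1 \<and> F Ec = 0 \<and> (\<forall>E>1. F E = 0 \<longrightarrow> E = Ec) \<and> deriv F Ec < 0"
      using Ec deriv_F_neg[OF Ec(1)] by blast
  qed (use continuous_on_deriv_F deriv_F_neg F_pos filterlim_F_at_bot filterlim_F_at_right_1
      filterlim_F_at_left_1 in auto)
qed

end
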